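(* Let $\mathbf a=(a_1,\dots,a_k)$ be a sequence of nonnegative integers and $1\le \ell\le k$. There is a bijection between $D(a_1,\dots,a_k)$ and $\hat D_\ell(a_1,\dots,a_{\ell-1},a_\ell+1,a_{\ell+1},\dots,a_k)$.
   Context: For $\mathbf a=(a_1,\dots,a_k)$ with nonnegative integer entries summing to $n$, put $c_0=0$, $c_j=a_1+\dots+a_j$, and let the $j$-th block be $A_j=\{c_{j-1}+1,\dots,c_j\}$. Let $S_{\mathbf a}\subseteq S_n$ be the set of permutations $\pi$ of $[n]$ with $\pi_i>\pi_{i+1}$ whenever $i,i+1$ lie in the same block. A fixed point is an $i$ with $\pi_i=i$. $D(\mathbf a)$ is the set of derangements in $S_{\mathbf a}$, and $\hat D_\ell(\mathbf a)$ is the set of permutations in $S_{\mathbf a}$ that have a fixed point in $A_\ell$ but no fixed point in any other block. *)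

theory Defs
  imports "HOL-Combinatorics.Permutations"
begin

text \<open>Compositions are lists a = [a_1,...,a_k] of naturals; blocks are indexed 1..k.
  c_j = a_1 + ... + a_j, block j is {c_(j-1)+1 .. c_j}.\<close>

definition psum :: "nat list \<Rightarrow> nat \<Rightarrow> nat" where
  "psum a j = sum_list (take j a)"

definition block :: "nat list \<Rightarrow> nat \<Rightarrow> nat set" where
  "block a j = {psum a (j - 1) + 1 .. psum a j}"

definition Sa :: "nat list \<Rightarrow> (nat \<Rightarrow> nat) set" where
  "Sa a = {\<pi>. \<pi> permutes {1..sum_list a} \<and>
     (\<forall>j \<in> {1..length a}. \<forall>i. i \<in> block a j \<and> i + 1 \<in> block a j \<longrightarrow> \<pi> i > \<pi> (i + 1))}"

definition Der :: "nat list \<Rightarrow> (nat \<Rightarrow> nat) set" where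
  "Der a = {\<pi> \<in> Sa a. \<forall>i \<in> {1..sum_list a}. \<pi> i \<noteq> i}"

definition Dhat :: "nat \<Rightarrow> nat list \<Rightarrow> (nat \<Rightarrow> nat) set" where
  "Dhat l a = {\<pi> \<in> Sa a. (\<exists>i \<in> block a l. \<pi> i = i) \<and>
     (\<forall>j \<in> {1..length a}. j \<noteq> l \<longrightarrow> (\<forall>i \<in> block a j. \<pi> i \<noteq> i))}"

end

theory Submission
  imports Defs
begin

text \<open>A derangement \<sigma> \<in> D(a) is decreasing on the block A_l = {u..v} and has no fixed point
  there, so A_l is cut at a unique position p \<in> {u..v+1}: the points of A_l below p are
  sent to values \<ge> p and the others to values < p. Opening a gap at p (every label \<ge> p moves up
  by one) and filling it with the fixed point p gives a permutation that is decreasing exactly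
  because of this cut, whose only fixed points lie in the enlarged block {u..v+1}, and there is
  only one of them, since a decreasing function has at most one fixed point. Deleting that fixed
  point inverts the construction.\<close>

definition skip :: "nat \<Rightarrow> nat \<Rightarrow> nat" where
  "skip p i = (if i < p then i else Suc i)"

definition unskip :: "nat \<Rightarrow> nat \<Rightarrow> nat" where
  "unskip p v = (if v < p then v else v - 1)"

lemma unskip_skip [simp]: "unskip p (skip p i) = i"
  by (simp add: skip_def unskip_def)

lemma skip_unskip: "v \<noteq> p \<Longrightarrow> skip p (unskip p v) = v"
  by (auto simp: skip_def unskip_def)

lemma skip_neq [simp]: "skip p i \<noteq> p"
  by (simp add: skip_def)

lemma skip_less_skip_iff [simp]: "skip p i < skip p j \<longleftrightarrow> i < j"
  by (simp add: skip_def)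

lemma skip_inject [simp]: "skip p i = skip p j \<longleftrightarrow> i = j"
  by (auto simp: skip_def)

lemma skip_less_iff [simp]: "skip p i < p \<longleftrightarrow> i < p"
  by (simp add: skip_def)

lemma less_skip_iff [simp]: "p < skip p i \<longleftrightarrow> p \<le> i"
  by (simp add: skip_def)

lemma insert_skip_image_atLeastAtMost:
  "p \<in> {u..Suc v} \<Longrightarrow> insert p (skip p ` {u..v}) = {u..Suc v}"
proof (intro equalityI subsetI)
  fix x assume "p \<in> {u..Suc v}" "x \<in> {u..Suc v}"
  then have "x = skip p (unskip p x) \<and> unskip p x \<in> {u..v}" if "x \<noteq> p"
    using that by (auto simp: skip_def unskip_def)
  then show "x \<in> insert p (skip p ` {u..v})"
    by (cases "x = p") auto
qed (auto simp: skip_def)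

definition insert_fixpoint :: "nat \<Rightarrow> (nat \<Rightarrow> nat) \<Rightarrow> nat \<Rightarrow> nat" where
  "insert_fixpoint p \<sigma> i = (if i = p then p else skip p (\<sigma> (unskip p i)))"

lemma insert_fixpoint_at [simp]: "insert_fixpoint p \<sigma> p = p"
  by (simp add: insert_fixpoint_def)

lemma insert_fixpoint_skip [simp]: "insert_fixpoint p \<sigma> (skip p i) = skip p (\<sigma> i)"
  by (simp add: insert_fixpoint_def)

lemma inj_insert_fixpoint: "inj (insert_fixpoint p)"
proof (rule injI)
  fix \<sigma> \<tau> assume "insert_fixpoint p \<sigma> = insert_fixpoint p \<tau>"
  then have "skip p (\<sigma> i) = skip p (\<tau> i)" for i
    by (metis insert_fixpoint_skip)
  then show "\<sigma> = \<tau>" by auto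
qed

lemma ex_insert_fixpoint_eq:
  assumes "inj \<pi>" "\<pi> p = p"
  shows "\<exists>\<sigma>. \<pi> = insert_fixpoint p \<sigma>"
proof
  have "\<pi> i \<noteq> p" if "i \<noteq> p" for i
    using assms that by (metis injD)
  then show "\<pi> = insert_fixpoint p (unskip p \<circ> \<pi> \<circ> skip p)"
    using assms(2) by (auto simp: insert_fixpoint_def skip_unskip)
qed

lemma insert_fixpoint_comp:
  "insert_fixpoint p (\<sigma> \<circ> \<tau>) = insert_fixpoint p \<sigma> \<circ> insert_fixpoint p \<tau>"
  by (auto simp: insert_fixpoint_def)

lemma insert_fixpoint_id [simp]: "insert_fixpoint p id = id"
  by (auto simp: insert_fixpoint_def skip_unskip)

lemma permutes_insert_fixpoint_iff:
  "insert_fixpoint p \<sigma> permutes insert p (skip p ` S) \<longleftrightarrow> \<sigma> permutes S"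
proof
  assume \<pi>: "insert_fixpoint p \<sigma> permutes insert p (skip p ` S)"
  then have "inj (inv (insert_fixpoint p \<sigma>))" "inv (insert_fixpoint p \<sigma>) p = p"
    by (simp_all add: permutes_inj[OF permutes_inv[OF \<pi>]] permutes_inv_eq[OF \<pi>])
  then obtain \<tau> where \<tau>: "inv (insert_fixpoint p \<sigma>) = insert_fixpoint p \<tau>"
    using ex_insert_fixpoint_eq by blast
  have "insert_fixpoint p (\<sigma> \<circ> \<tau>) = insert_fixpoint p id" "insert_fixpoint p (\<tau> \<circ> \<sigma>) = insert_fixpoint p id"
    using permutes_inv_o[OF \<pi>] by (simp_all add: insert_fixpoint_comp flip: \<tau>)
  then have "\<sigma> \<circ> \<tau> = id" "\<tau> \<circ> \<sigma> = id"
    by (simp_all add: inj_insert_fixpoint[THEN injD])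
  then have "bij \<sigma>"
    by (intro o_bij)
  moreover have "\<sigma> x = x" if "x \<notin> S" for x
    using permutes_not_in[OF \<pi>, of "skip p x"] that by (auto simp: image_iff)
  ultimately show "\<sigma> permutes S"
    by (simp add: permutes_def bij_iff)
next
  assume \<sigma>: "\<sigma> permutes S"
  have "insert_fixpoint p \<sigma> \<circ> insert_fixpoint p (inv \<sigma>) = id"
    "insert_fixpoint p (inv \<sigma>) \<circ> insert_fixpoint p \<sigma> = id"
    using permutes_inv_o[OF \<sigma>] by (simp_all flip: insert_fixpoint_comp)
  then have "bij (insert_fixpoint p \<sigma>)"
    by (intro o_bij)
  moreover have "insert_fixpoint p \<sigma> x = x" if "x \<notin> insert p (skip p ` S)" for x
  proof -
    have "x \<noteq> p"
      using that by blast
    then have x: "x = skip p (unskip p x)"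
      by (simp add: skip_unskip)
    with that have "unskip p x \<notin> S"
      by (metis image_eqI insertCI)
    then have "insert_fixpoint p \<sigma> (skip p (unskip p x)) = skip p (unskip p x)"
      by (simp add: permutes_not_in[OF \<sigma>])
    then show ?thesis
      by (simp only: x[symmetric])
  qed
  ultimately show "insert_fixpoint p \<sigma> permutes insert p (skip p ` S)"
    by (simp add: permutes_def bij_iff)
qed

lemma permutes_insert_fixpoint_atLeastAtMost_iff:
  "p \<in> {u..Suc v} \<Longrightarrow> insert_fixpoint p \<sigma> permutes {u..Suc v} \<longleftrightarrow> \<sigma> permutes {u..v}"
  by (metis insert_skip_image_atLeastAtMost permutes_insert_fixpoint_iff)

lemma strict_antimono_on_atLeastAtMost_iff:
  fixes f :: "nat \<Rightarrow> 'a::order"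
  shows "strict_antimono_on {u..v} f \<longleftrightarrow> (\<forall>i. u \<le> i \<and> i < v \<longrightarrow> f (Suc i) < f i)"
proof
  assume "\<forall>i. u \<le> i \<and> i < v \<longrightarrow> f (Suc i) < f i"
  note adjacent = this[rule_format]
  have "f y < f x" if "u \<le> x" "Suc x \<le> y" "y \<le> v" for x y
    using that(2,3)
  proof (induction y rule: dec_induct)
    case base
    then show ?case
      using adjacent that(1) by simp
  next
    case (step n)
    then have "f (Suc n) < f n"
      using adjacent that(1) by simp
    also have "f n < f x"
      using step by simp
    finally show ?case .
  qed
  then show "strict_antimono_on {u..v} f"
    by (auto intro: monotone_onI)
qed (auto simp: monotone_on_def)

lemma strict_antimono_on_fixpoint_unique:
  fixes f :: "'a::linorder \<Rightarrow> 'a"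
  assumes "strict_antimono_on S f" "x \<in> S" "y \<in> S" "f x = x" "f y = y"
  shows "x = y"
  using assms by (metis linorder_neqE monotone_onD not_less_iff_gr_or_eq)

lemma strict_antimono_on_insert_fixpoint_image_iff:
  "strict_antimono_on (skip p ` B) (insert_fixpoint p \<sigma>) \<longleftrightarrow> strict_antimono_on B \<sigma>"
  by (auto simp: monotone_on_def)

definition cut_at :: "(nat \<Rightarrow> nat) \<Rightarrow> nat set \<Rightarrow> nat \<Rightarrow> bool" where
  "cut_at \<sigma> B p \<longleftrightarrow> (\<forall>i\<in>B. i < p \<longleftrightarrow> p \<le> \<sigma> i)"

lemma strict_antimono_on_insert_fixpoint_iff:
  "strict_antimono_on (insert p (skip p ` B)) (insert_fixpoint p \<sigma>) \<longleftrightarrow>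
     strict_antimono_on B \<sigma> \<and> cut_at \<sigma> B p"
  by (auto simp: monotone_on_def cut_at_def not_less)

lemma cut_at_imp_no_fixpoint: "cut_at \<sigma> B p \<Longrightarrow> i \<in> B \<Longrightarrow> \<sigma> i \<noteq> i"
  by (auto simp: cut_at_def)

lemma cut_at_unique:
  assumes "cut_at \<sigma> {u..v} p" "cut_at \<sigma> {u..v} q" "p \<in> {u..Suc v}" "q \<in> {u..Suc v}"
  shows "p = q"
proof -
  have "False" if "cut_at \<sigma> {u..v} p" "cut_at \<sigma> {u..v} q" "p \<in> {u..Suc v}" "q \<in> {u..Suc v}" "p < q"
    for p q
  proof -
    have "p \<in> {u..v}"
      using that by auto
    then have "\<sigma> p < p" "q \<le> \<sigma> p"
      using that by (auto simp: cut_at_def)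
    then show False
      using \<open>p < q\<close> by simp
  qed
  then show ?thesis
    using assms by (metis linorder_neqE_nat)
qed

lemma ex_cut_at:
  assumes mono: "strict_antimono_on {u..v} \<sigma>" and no_fix: "\<forall>i\<in>{u..v}. \<sigma> i \<noteq> i"
    and "u \<le> Suc v"
  shows "\<exists>p\<in>{u..Suc v}. cut_at \<sigma> {u..v} p"
proof -
  define P where "P q \<longleftrightarrow> u \<le> q \<and> (q = Suc v \<or> \<sigma> q < q)" for q
  define p where "p = (LEAST q. P q)"
  have "P (Suc v)"
    using \<open>u \<le> Suc v\<close> by (simp add: P_def)
  then have "P p" and p_le: "p \<le> Suc v"
    unfolding p_def by (rule LeastI, rule Least_le)
  have below: "\<not> P q" if "q < p" for q
    using that unfolding p_def by (rule not_less_Least)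
  have "cut_at \<sigma> {u..v} p"
    unfolding cut_at_def
  proof
    fix i assume i: "i \<in> {u..v}"
    show "i < p \<longleftrightarrow> p \<le> \<sigma> i"
    proof (cases "i < p")
      case True
      then have q: "p - 1 \<in> {u..v}" "i \<le> p - 1"
        using i p_le by auto
      moreover have "\<not> P (p - 1)"
        using True by (intro below) simp
      moreover have "\<sigma> (p - 1) \<noteq> p - 1"
        using no_fix q by blast
      ultimately have "p - 1 < \<sigma> (p - 1)"
        by (auto simp: P_def)
      moreover have "\<sigma> (p - 1) \<le> \<sigma> i"
        using monotone_onD[OF mono i q(1)] q(2) by (cases "i = p - 1") auto
      ultimately show ?thesis
        using True by simp
    next
      case False
      then have "p \<in> {u..v}" "\<sigma> p < p"
        using i \<open>P p\<close> by (auto simp: P_def)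
      moreover have "\<sigma> i \<le> \<sigma> p"
        using monotone_onD[OF mono \<open>p \<in> {u..v}\<close> i] False by (cases "i = p") auto
      ultimately show ?thesis
        using False by simp
    qed
  qed
  moreover have "p \<in> {u..Suc v}"
    using \<open>P p\<close> p_le by (simp add: P_def)
  ultimately show ?thesis
    by blast
qed

lemma ex1_cut_at:
  assumes "strict_antimono_on {u..v} \<sigma>" "\<forall>i\<in>{u..v}. \<sigma> i \<noteq> i" "u \<le> Suc v"
  shows "\<exists>!p. p \<in> {u..Suc v} \<and> cut_at \<sigma> {u..v} p"
  using ex_cut_at[OF assms] cut_at_unique by (auto intro: ex_ex1I)

text \<open>Stated with Suc (a ! k), the simp normal form of the a ! k + 1 in the theorem.\<close>

abbreviation incr_nth :: "nat list \<Rightarrow> nat \<Rightarrow> nat list" where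
  "incr_nth a k \<equiv> a[k := Suc (a ! k)]"

lemma psum_le_sum_list: "psum a j \<le> sum_list a"
  unfolding psum_def by (metis append_take_drop_id le_add1 sum_list_append)

lemma psum_mono: "i \<le> j \<Longrightarrow> psum a i \<le> psum a j"
  unfolding psum_def by (metis le_Suc_ex le_add1 sum_list_append take_add)

lemma block_Suc: "block a (Suc k) = {Suc (psum a k)..psum a (Suc k)}"
  by (simp add: block_def)

lemma block_subset: "block a j \<subseteq> {1..sum_list a}"
  using psum_le_sum_list[of a j] by (auto simp: block_def)

lemma UN_block: "(\<Union>j\<in>{1..length a}. block a j) = {1..sum_list a}"
proof (intro equalityI subsetI)
  fix i assume i: "i \<in> {1..sum_list a}"
  define j where "j = (LEAST j. i \<le> psum a j)"
  have ex: "i \<le> psum a (length a)"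
    using i by (simp add: psum_def)
  have "i \<le> psum a j" "j \<le> length a"
    unfolding j_def using ex by (rule LeastI, rule Least_le)
  moreover have "j \<noteq> 0"
    using \<open>i \<le> psum a j\<close> i by (cases j) (auto simp: psum_def)
  moreover have "\<not> i \<le> psum a (j - 1)"
    using \<open>j \<noteq> 0\<close> unfolding j_def by (intro not_less_Least) (simp add: j_def[symmetric])
  ultimately show "i \<in> (\<Union>j\<in>{1..length a}. block a j)"
    by (auto simp: block_def intro!: bexI[of _ j])
qed (use block_subset in blast)

lemma psum_incr_nth:
  assumes "k < length a"
  shows "psum (incr_nth a k) j = psum a j + (if k < j then 1 else 0)"
proof (cases "k < j")
  case True
  then have "k < length (take j a)"
    using assms by simp
  then show ?thesis
    using True by (simp add: psum_def take_update_swap sum_list_update)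
qed (simp add: psum_def)

lemma sum_list_incr_nth: "k < length a \<Longrightarrow> sum_list (incr_nth a k) = Suc (sum_list a)"
  using psum_incr_nth[of k a "length a"] by (simp add: psum_def)

lemma block_incr_nth_self:
  "k < length a \<Longrightarrow> block (incr_nth a k) (Suc k) = {Suc (psum a k)..Suc (psum a (Suc k))}"
  by (simp add: block_Suc psum_incr_nth)

lemma block_incr_nth_other:
  assumes k: "k < length a" and "j \<noteq> Suc k" and p: "p \<in> block (incr_nth a k) (Suc k)"
  shows "block (incr_nth a k) j = skip p ` block a j"
proof (cases "j \<le> k")
  case True
  have "x < p" if "x \<in> block a j" for x
    using that p psum_mono[OF True, of a] by (auto simp: block_def psum_incr_nth[OF k])
  then have "skip p ` block a j = block a j"
    by (auto simp: skip_def image_iff)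
  then show ?thesis
    using True by (auto simp: block_def psum_incr_nth k)
next
  case False
  then have j: "Suc k \<le> j - 1"
    using \<open>j \<noteq> Suc k\<close> by simp
  have "p \<le> x" if "x \<in> block a j" for x
    using that p psum_mono[OF j, of a] by (auto simp: block_def psum_incr_nth[OF k])
  then have "skip p ` block a j = Suc ` block a j"
    by (intro image_cong) (auto simp: skip_def not_less[symmetric])
  then show ?thesis
    using j by (auto simp: block_def psum_incr_nth k)
qed

lemma Sa_iff:
  "\<pi> \<in> Sa a \<longleftrightarrow> \<pi> permutes {1..sum_list a} \<and> (\<forall>j\<in>{1..length a}. strict_antimono_on (block a j) \<pi>)"
  by (auto simp: Sa_def block_def strict_antimono_on_atLeastAtMost_iff)

lemma Der_iff: "\<sigma> \<in> Der a \<longleftrightarrow> \<sigma> \<in> Sa a \<and> (\<forall>j\<in>{1..length a}. \<forall>i\<in>block a j. \<sigma> i \<noteq> i)"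
  unfolding Der_def UN_block[symmetric] by blast

lemma insert_fixpoint_in_Dhat_iff:
  assumes k: "k < length a" and \<sigma>: "\<sigma> permutes {1..sum_list a}"
    and p: "p \<in> block (incr_nth a k) (Suc k)"
  shows "insert_fixpoint p \<sigma> \<in> Dhat (Suc k) (incr_nth a k) \<longleftrightarrow>
    \<sigma> \<in> Der a \<and> cut_at \<sigma> (block a (Suc k)) p"
proof -
  let ?a' = "incr_nth a k" and ?\<pi> = "insert_fixpoint p \<sigma>" and ?B = "block a (Suc k)"
  have block_self: "block ?a' (Suc k) = insert p (skip p ` ?B)"
    using p unfolding block_incr_nth_self[OF k] block_Suc[of a k] by (simp add: insert_skip_image_atLeastAtMost)
  have block_other: "block ?a' j = skip p ` block a j" if "j \<noteq> Suc k" for j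
    using block_incr_nth_other[OF k that p] .
  have "p \<in> {1..Suc (sum_list a)}"
    using p block_subset sum_list_incr_nth[OF k] by fastforce
  then have perm: "?\<pi> permutes {1..sum_list ?a'}"
    using \<sigma> by (simp add: sum_list_incr_nth[OF k] permutes_insert_fixpoint_atLeastAtMost_iff)
  have mono: "strict_antimono_on (block ?a' j) ?\<pi> \<longleftrightarrow>
      strict_antimono_on (block a j) \<sigma> \<and> (j = Suc k \<longrightarrow> cut_at \<sigma> ?B p)" for j
    by (cases "j = Suc k") (simp_all add: block_self block_other
        strict_antimono_on_insert_fixpoint_iff strict_antimono_on_insert_fixpoint_image_iff)
  have no_fix: "(\<forall>i\<in>block ?a' j. ?\<pi> i \<noteq> i) \<longleftrightarrow> (\<forall>i\<in>block a j. \<sigma> i \<noteq> i)" if "j \<noteq> Suc k" for j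
    using that by (simp add: block_other)
  have "Suc k \<in> {1..length a}"
    using k by simp
  then have mono_all: "(\<forall>j\<in>{1..length a}. strict_antimono_on (block ?a' j) ?\<pi>) \<longleftrightarrow>
      (\<forall>j\<in>{1..length a}. strict_antimono_on (block a j) \<sigma>) \<and> cut_at \<sigma> ?B p"
    by (auto simp: mono)
  have no_fix_all: "(\<forall>j\<in>{1..length a}. j \<noteq> Suc k \<longrightarrow> (\<forall>i\<in>block ?a' j. ?\<pi> i \<noteq> i)) \<longleftrightarrow>
      (\<forall>j\<in>{1..length a}. \<forall>i\<in>block a j. \<sigma> i \<noteq> i)" if "cut_at \<sigma> ?B p"
  proof -
    have "\<forall>i\<in>?B. \<sigma> i \<noteq> i"
      using that cut_at_imp_no_fixpoint by blast
    then show ?thesis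
      by (auto simp: no_fix)
  qed
  have Sa': "?\<pi> \<in> Sa ?a' \<longleftrightarrow> (\<forall>j\<in>{1..length a}. strict_antimono_on (block ?a' j) ?\<pi>)"
    using perm by (simp add: Sa_iff)
  have "\<exists>i\<in>block ?a' (Suc k). ?\<pi> i = i"
    using block_self by auto
  then show ?thesis
    unfolding Dhat_def Der_iff mem_Collect_eq Sa' length_list_update
    using \<sigma> mono_all no_fix_all by (auto simp: Sa_iff)
qed

lemma bij_betw_Der_Dhat:
  assumes k: "k < length a"
  shows "bij_betw
    (\<lambda>\<sigma>. insert_fixpoint (THE p. p \<in> block (incr_nth a k) (Suc k) \<and> cut_at \<sigma> (block a (Suc k)) p) \<sigma>)
    (Der a) (Dhat (Suc k) (incr_nth a k))"
    (is "bij_betw (\<lambda>\<sigma>. insert_fixpoint (?cut \<sigma>) \<sigma>) _ _")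
proof -
  let ?a' = "incr_nth a k" and ?B = "block a (Suc k)" and ?B' = "block (incr_nth a k) (Suc k)"
  have "Suc k \<in> {1..length a}"
    using k by simp
  have ex1_cut: "\<exists>!p. p \<in> ?B' \<and> cut_at \<sigma> ?B p" if "\<sigma> \<in> Der a" for \<sigma>
  proof -
    have "strict_antimono_on ?B \<sigma>" "\<forall>i\<in>?B. \<sigma> i \<noteq> i"
      using that \<open>Suc k \<in> {1..length a}\<close> by (auto simp: Der_iff Sa_iff)
    moreover have "Suc (psum a k) \<le> Suc (psum a (Suc k))"
      using psum_mono[of k "Suc k" a] by simp
    ultimately show ?thesis
      unfolding block_incr_nth_self[OF k] block_Suc[of a k] by (rule ex1_cut_at)
  qed
  have cut: "?cut \<sigma> \<in> ?B' \<and> cut_at \<sigma> ?B (?cut \<sigma>)" if "\<sigma> \<in> Der a" for \<sigma>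
    using theI'[OF ex1_cut[OF that]] .
  have in_Dhat: "insert_fixpoint (?cut \<sigma>) \<sigma> \<in> Dhat (Suc k) ?a'" if "\<sigma> \<in> Der a" for \<sigma>
    using that cut[OF that] insert_fixpoint_in_Dhat_iff[OF k] by (simp add: Der_iff Sa_iff)
  have fixpoint_unique: "p = q"
    if "\<pi> \<in> Dhat (Suc k) ?a'" "p \<in> ?B'" "q \<in> ?B'" "\<pi> p = p" "\<pi> q = q" for \<pi> p q
  proof -
    have "strict_antimono_on ?B' \<pi>"
      using that(1) \<open>Suc k \<in> {1..length a}\<close> by (simp add: Dhat_def Sa_iff)
    then show ?thesis
      using that(2-) by (rule strict_antimono_on_fixpoint_unique)
  qed
  show ?thesis
  proof (rule bij_betwI')
    fix \<sigma> \<tau> assume \<sigma>: "\<sigma> \<in> Der a" and \<tau>: "\<tau> \<in> Der a"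
    show "insert_fixpoint (?cut \<sigma>) \<sigma> = insert_fixpoint (?cut \<tau>) \<tau> \<longleftrightarrow> \<sigma> = \<tau>"
    proof
      assume eq: "insert_fixpoint (?cut \<sigma>) \<sigma> = insert_fixpoint (?cut \<tau>) \<tau>"
      have "insert_fixpoint (?cut \<sigma>) \<sigma> (?cut \<tau>) = ?cut \<tau>"
        by (simp add: eq)
      then have "?cut \<sigma> = ?cut \<tau>"
        using fixpoint_unique[OF in_Dhat[OF \<sigma>]] cut[OF \<sigma>] cut[OF \<tau>] by simp
      then show "\<sigma> = \<tau>"
        using eq inj_insert_fixpoint by (simp add: inj_eq)
    qed simp
  next
    fix \<sigma> assume "\<sigma> \<in> Der a"
    then show "insert_fixpoint (?cut \<sigma>) \<sigma> \<in> Dhat (Suc k) ?a'"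
      by (rule in_Dhat)
  next
    fix \<pi> assume \<pi>: "\<pi> \<in> Dhat (Suc k) ?a'"
    then obtain p where p: "p \<in> ?B'" "\<pi> p = p"
      by (auto simp: Dhat_def)
    have \<pi>_perm: "\<pi> permutes {1..Suc (sum_list a)}"
      using \<pi> by (simp add: Dhat_def Sa_iff sum_list_incr_nth[OF k])
    then obtain \<sigma> where \<sigma>: "\<pi> = insert_fixpoint p \<sigma>"
      using ex_insert_fixpoint_eq p(2) permutes_inj by blast
    have "p \<in> {1..Suc (sum_list a)}"
      using p(1) block_subset sum_list_incr_nth[OF k] by fastforce
    then have "\<sigma> permutes {1..sum_list a}"
      using \<pi>_perm by (simp add: \<sigma> permutes_insert_fixpoint_atLeastAtMost_iff)
    then have "\<sigma> \<in> Der a" "cut_at \<sigma> ?B p"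
      using \<pi> insert_fixpoint_in_Dhat_iff[OF k _ p(1)] by (simp_all add: \<sigma>)
    moreover from this have "?cut \<sigma> = p"
      using the1_equality[OF ex1_cut] p(1) by blast
    ultimately show "\<exists>\<sigma>\<in>Der a. \<pi> = insert_fixpoint (?cut \<sigma>) \<sigma>"
      using \<sigma> by blast
  qed
qed

theorem mainTheorem10:
  fixes a :: "nat list" and l :: nat
  assumes "1 \<le> l" and "l \<le> length a"
  shows "\<exists>f. bij_betw f (Der a) (Dhat l (a[l - 1 := a ! (l - 1) + 1]))"
proof -
  obtain k where "l = Suc k"
    using assms(1) by (cases l) auto
  then show ?thesis
    using bij_betw_Der_Dhat[of k a] assms(2) by auto
qed

end
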